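(* Let $G$ be a finite group and $T$ a $G$-transfer system. If $T'$ is a saturated $G$-transfer system containing $T$, then $(T,T')$ is a compatible pair.
   Context: A $G$-transfer system is a partial order $\to$ on the set of subgroups of $G$ such that: $K\to H$ implies $K\le H$; $H\to H$ for all $H$; $L\to K$ and $K\to H$ imply $L\to H$; $K\to H$ implies $K\cap L\to H\cap L$ for every $L\le G$; $K\to H$ implies $gKg^{-1}\to gHg^{-1}$ for all $g\in G$. A transfer system is saturated if whenever $L\le K\le H$ and $L\to H$ is in it, then $K\to H$ is in it. A pair $(T,T')$ of $G$-transfer systems is compatible if (1) $T\subseteq T'$, and (2) for all subgroups $A,B,C$ with $B,C\le A$: if $B\to A$ is in $T$ and $B\cap C\to B$ is in $T'$, then $C\to A$ is in $T'$. *)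

theory Defs
  imports "HOL-Algebra.Group"
begin

text \<open>A G-transfer system is encoded as a set T of pairs (K, H) of subgroups of G,
  where (K, H) in T means K \<rightarrow> H.\<close>

definition conj_subgroup :: "('a, 'b) monoid_scheme \<Rightarrow> 'a \<Rightarrow> 'a set \<Rightarrow> 'a set" where
  "conj_subgroup G g K = (\<lambda>k. g \<otimes>\<^bsub>G\<^esub> k \<otimes>\<^bsub>G\<^esub> inv\<^bsub>G\<^esub> g) ` K"

definition transfer_system :: "('a, 'b) monoid_scheme \<Rightarrow> ('a set \<times> 'a set) set \<Rightarrow> bool" where
  "transfer_system G T \<longleftrightarrow>
     (\<forall>K H. (K, H) \<in> T \<longrightarrow> subgroup K G \<and> subgroup H G) \<and>
     \<comment> \<open>partial order on the set of subgroups\<close>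
     (\<forall>H. subgroup H G \<longrightarrow> (H, H) \<in> T) \<and>
     (\<forall>L K H. (L, K) \<in> T \<longrightarrow> (K, H) \<in> T \<longrightarrow> (L, H) \<in> T) \<and>
     (\<forall>K H. (K, H) \<in> T \<longrightarrow> (H, K) \<in> T \<longrightarrow> K = H) \<and>
     \<comment> \<open>refines inclusion\<close>
     (\<forall>K H. (K, H) \<in> T \<longrightarrow> K \<subseteq> H) \<and>
     \<comment> \<open>closed under restriction\<close>
     (\<forall>K H L. (K, H) \<in> T \<longrightarrow> subgroup L G \<longrightarrow> (K \<inter> L, H \<inter> L) \<in> T) \<and>
     \<comment> \<open>closed under conjugation\<close>
     (\<forall>K H g. (K, H) \<in> T \<longrightarrow> g \<in> carrier G \<longrightarrow>
        (conj_subgroup G g K, conj_subgroup G g H) \<in> T)"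

definition saturated :: "('a, 'b) monoid_scheme \<Rightarrow> ('a set \<times> 'a set) set \<Rightarrow> bool" where
  "saturated G T \<longleftrightarrow>
     (\<forall>L K H. subgroup L G \<longrightarrow> subgroup K G \<longrightarrow> subgroup H G \<longrightarrow>
        L \<subseteq> K \<longrightarrow> K \<subseteq> H \<longrightarrow> (L, H) \<in> T \<longrightarrow> (K, H) \<in> T)"

definition compatible_pair ::
  "('a, 'b) monoid_scheme \<Rightarrow> ('a set \<times> 'a set) set \<Rightarrow> ('a set \<times> 'a set) set \<Rightarrow> bool" where
  "compatible_pair G T T' \<longleftrightarrow>
     T \<subseteq> T' \<and>
     (\<forall>A B C. subgroup A G \<longrightarrow> subgroup B G \<longrightarrow> subgroup C G \<longrightarrow>
        B \<subseteq> A \<longrightarrow> C \<subseteq> A \<longrightarrow> (B, A) \<in> T \<longrightarrow> (B \<inter> C, B) \<in> T' \<longrightarrow> (C, A) \<in> T')"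

end

theory Submission
  imports Defs
begin

text \<open>If \<open>B \<rightarrow> A\<close> in \<open>T\<close> and \<open>B \<inter> C \<rightarrow> B\<close> in \<open>T'\<close>, then \<open>B \<inter> C \<rightarrow> A\<close> in \<open>T'\<close> by
  transitivity, and saturation of \<open>T'\<close> lifts this along \<open>B \<inter> C \<le> C \<le> A\<close> to \<open>C \<rightarrow> A\<close>.\<close>

lemma transfer_system_trans:
  assumes "transfer_system G T" and "(L, K) \<in> T" and "(K, H) \<in> T"
  shows "(L, H) \<in> T"
proof -
  have "\<forall>L K H. (L, K) \<in> T \<longrightarrow> (K, H) \<in> T \<longrightarrow> (L, H) \<in> T"
    using assms(1) unfolding transfer_system_def by (elim conjE)
  with assms(2,3) show ?thesis by blast
qed

lemma transfer_system_subgroups: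
  assumes "transfer_system G T" and "(K, H) \<in> T"
  shows "subgroup K G" and "subgroup H G"
proof -
  have "\<forall>K H. (K, H) \<in> T \<longrightarrow> subgroup K G \<and> subgroup H G"
    using assms(1) unfolding transfer_system_def by (elim conjE)
  with assms(2) show "subgroup K G" and "subgroup H G" by blast+
qed

lemma saturatedD:
  assumes "transfer_system G T" and "saturated G T"
    and "subgroup K G" and "L \<subseteq> K" and "K \<subseteq> H" and "(L, H) \<in> T"
  shows "(K, H) \<in> T"
proof -
  have "subgroup L G" and "subgroup H G"
    using transfer_system_subgroups[OF \<open>transfer_system G T\<close> \<open>(L, H) \<in> T\<close>] .
  with assms show ?thesis
    unfolding saturated_def by blast
qed

lemma compatible_pair_if_saturated:
  assumes T': "transfer_system G T'" and sat: "saturated G T'" and sub: "T \<subseteq> T'"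
  shows "compatible_pair G T T'"
  unfolding compatible_pair_def
proof (intro conjI allI impI)
  show "T \<subseteq> T'" by (fact sub)
next
  fix A B C
  assume "subgroup C G" and "C \<subseteq> A" and "(B, A) \<in> T" and "(B \<inter> C, B) \<in> T'"
  then have "(B \<inter> C, A) \<in> T'"
    using sub transfer_system_trans[OF T'] by (meson subsetD)
  then show "(C, A) \<in> T'"
    by (rule saturatedD[OF T' sat \<open>subgroup C G\<close> Int_lower2 \<open>C \<subseteq> A\<close>])
qed

theorem mainTheorem4:
  fixes G :: "('a, 'b) monoid_scheme" and T T' :: "('a set \<times> 'a set) set"
  assumes "group G" and "finite (carrier G)"
    and "transfer_system G T"
    and "transfer_system G T'" and "saturated G T'" and "T \<subseteq> T'"
  shows "compatible_pair G T T'"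
  using assms(4-6) by (rule compatible_pair_if_saturated)

end
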